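(* Let $G=\{1,\dots,d\}^2$ and run the following randomized procedure. Initialize $S=\emptyset$, $B=\emptyset$, $\mathsf{Flag}=x$. Sample $g\in G$ uniformly at random and set $B=\{g\}$, $S=\{g\}$. Then, while $S\ne G$, sample $g=(g_x,g_y)\in G$ uniformly at random (independently) and: if $\mathsf{Flag}=x$, $g_x\in S_x$ and $g\notin S$, set $B=B\cup\{g\}$, $S=S\cup(S_x\times\{g_y\})$, $\mathsf{Flag}=y$; if $\mathsf{Flag}=y$, $g_y\in S_y$ and $g\notin S$, set $B=B\cup\{g\}$, $S=S\cup(\{g_x\}\times S_y)$, $\mathsf{Flag}=x$; otherwise do nothing. Here $S_x$ (resp. $S_y$) is the set of first (resp. second) coordinates appearing in $S$. Then for $c>0$: if the number of sampled groups is greater than $8cd\log d$, then $G\subseteq\mathsf{DAff}(B)$ with probability greater than or equal to $1-\frac1c$.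
   Context: For $z=(z_1,z_2)\in G$, $\sigma(z)\in\{0,1\}^{2d}$ is the concatenation of the one-hot encodings of $z_1$ and $z_2$. For a finite $\mathcal{A}=\{z^{(1)},\dots,z^{(k)}\}\subseteq G$, $\mathsf{DAff}(\mathcal{A})=\{z\in G:\exists\alpha\in\mathbb{R}^k,\ \sum_i\alpha_i=1,\ \sigma(z)=\sum_i\alpha_i\sigma(z^{(i)})\}$. *)

theory Defs
  imports "HOL-Probability.Probability"
begin

definition grid :: "nat \<Rightarrow> (nat \<times> nat) set" where
  "grid d = {1..d} \<times> {1..d}"

text \<open>sigma(z): concatenation of the one-hot encodings of z1 and z2, as a vector
  indexed by two disjoint copies of {1..d} (Inl i: first block, Inr i: second block).\<close>
definition sigma :: "nat \<times> nat \<Rightarrow> nat + nat \<Rightarrow> real" where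
  "sigma z j = (case j of Inl i \<Rightarrow> (if i = fst z then 1 else 0)
                        | Inr i \<Rightarrow> (if i = snd z then 1 else 0))"

definition DAff :: "nat \<Rightarrow> (nat \<times> nat) set \<Rightarrow> (nat \<times> nat) set" where
  "DAff d A = {z \<in> grid d. \<exists>\<alpha> :: nat \<times> nat \<Rightarrow> real.
       (\<Sum>a\<in>A. \<alpha> a) = 1 \<and> (\<forall>j. sigma z j = (\<Sum>a\<in>A. \<alpha> a * sigma a j))}"

text \<open>State of the procedure: (S, B, Flag), Flag = True meaning Flag = x.\<close>
type_synonym state = "(nat \<times> nat) set \<times> (nat \<times> nat) set \<times> bool"

definition upd :: "state \<Rightarrow> nat \<times> nat \<Rightarrow> state" where
  "upd st g = (case st of (S, B, fl) \<Rightarrow>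
     if fl \<and> fst g \<in> fst ` S \<and> g \<notin> S then (S \<union> (fst ` S \<times> {snd g}), insert g B, False)
     else if \<not> fl \<and> snd g \<in> snd ` S \<and> g \<notin> S then (S \<union> ({fst g} \<times> snd ` S), insert g B, True)
     else (S, B, fl))"

definition step :: "nat \<Rightarrow> state \<Rightarrow> state pmf" where
  "step d st = (if fst st = grid d then return_pmf st
                else map_pmf (upd st) (pmf_of_set (grid d)))"

text \<open>Distribution of the state after the initial sample and n loop iterations.\<close>
fun proc :: "nat \<Rightarrow> nat \<Rightarrow> state pmf" where
  "proc d 0 = map_pmf (\<lambda>g. ({g}, {g}, True)) (pmf_of_set (grid d))"
| "proc d (Suc n) = bind_pmf (proc d n) (step d)"

end

theory Submission
  imports Defs "HOL-Analysis.Harmonic_Numbers"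
begin

(* Invariant: S is a rectangle A x C, with |C| = |A| while Flag = x and |C| = |A| + 1 while
  Flag = y, and S is contained in DAff(B).  A new sample g = (x', y) with x' in A adds the
  column y, since sigma(x, y) = sigma(x, y0) + sigma(x', y) - sigma(x', y0) for any y0 in C
  (rows are symmetric).  So once S = G, all of G lies in DAff(B).

  From a k x k state the next sample succeeds with probability k (d - k) / d^2, from a
  k x (k + 1) state with probability (k + 1)(d - k) / d^2.  The expected number Phi of remaining
  iterations, a sum of geometric waiting times, therefore drops by exactly 1 in expectation at
  each unfinished iteration, and the probability of being unfinished never increases.  Hence
  N * P(unfinished after N - 1 iterations) <= Phi(1 x 1) <= 4 d H(d - 1) <= 8 d ln d < N / c. *)

lemma integral_pmf_of_set_hit_or_wait:
  fixes f :: "'a \<Rightarrow> real"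
  assumes G: "finite G" and H: "H \<subseteq> G" "H \<noteq> {}"
    and f: "\<And>g. g \<in> G \<Longrightarrow> f g = (if g \<in> H then a else a + real (card G) / real (card H))"
  shows "(\<integral>g. f g \<partial>measure_pmf (pmf_of_set G)) = a + real (card G) / real (card H) - 1"
proof -
  have "finite H"
    using G H(1) by (rule finite_subset[rotated])
  then have fin: "finite H" "card H > 0" "card H \<le> card G"
    using G H by (auto simp: card_gt_0_iff card_mono)
  have "sum f G = sum f H + sum f (G - H)"
    using G H by (simp add: sum.subset_diff)
  also have "\<dots> = real (card H) * a + (real (card G) - real (card H)) * (a + real (card G) / real (card H))"
    using G H f by (simp add: card_Diff_subset fin(1) of_nat_diff[OF fin(3)] subset_iff)
  finally have "sum f G = real (card G) * (a + real (card G) / real (card H) - 1)"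
    using \<open>card H > 0\<close> by (simp add: field_simps)
  moreover have "G \<noteq> {}"
    using H by blast
  ultimately show ?thesis
    using G by (simp add: integral_pmf_of_set card_gt_0_iff)
qed

lemma emeasure_bind_pmf_le_absorbing:
  fixes M :: "'a pmf" and K :: "'a \<Rightarrow> 'a pmf"
  assumes "\<And>x. x \<notin> T \<Longrightarrow> set_pmf (K x) \<inter> T = {}"
  shows "emeasure (bind_pmf M K) T \<le> emeasure M T"
proof -
  have "emeasure (K x) T \<le> indicator T x" for x
    using assms[of x] measure_pmf.emeasure_le_1[of "K x" T]
    by (cases "x \<in> T") (simp_all add: measure_pmf.emeasure_eq_measure measure_pmf_zero_iff)
  then have "(\<integral>\<^sup>+x. emeasure (K x) T \<partial>M) \<le> (\<integral>\<^sup>+x. indicator T x \<partial>M)"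
    by (intro nn_integral_mono)
  then show ?thesis
    by simp
qed

lemma drift_tail_bound:
  fixes M :: "nat \<Rightarrow> 'a pmf" and K :: "'a \<Rightarrow> 'a pmf" and f :: "'a \<Rightarrow> ennreal"
  assumes M_Suc: "\<And>n. M (Suc n) = bind_pmf (M n) K"
    and drift: "\<And>n x. x \<in> set_pmf (M n) \<Longrightarrow> (\<integral>\<^sup>+y. f y \<partial>K x) + indicator T x \<le> f x"
    and absorbing: "\<And>x. x \<notin> T \<Longrightarrow> set_pmf (K x) \<inter> T = {}"
  shows "of_nat (Suc n) * emeasure (M n) T \<le> (\<integral>\<^sup>+x. f x \<partial>M 0)"
proof -
  have tail_le_potential: "emeasure (M n) T \<le> (\<integral>\<^sup>+x. f x \<partial>M n)" for n
  proof -
    have "indicator T x \<le> f x" if "x \<in> set_pmf (M n)" for x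
      using drift[OF that] by (rule order_trans[rotated]) simp
    then have "(\<integral>\<^sup>+x. indicator T x \<partial>M n) \<le> (\<integral>\<^sup>+x. f x \<partial>M n)"
      by (intro nn_integral_mono_AE) (simp add: AE_measure_pmf_iff)
    then show ?thesis
      by simp
  qed
  have tail_mono: "emeasure (M (Suc n)) T \<le> emeasure (M n) T" for n
    unfolding M_Suc using absorbing by (rule emeasure_bind_pmf_le_absorbing)
  have accumulated: "(\<integral>\<^sup>+x. f x \<partial>M n) + of_nat n * emeasure (M n) T \<le> (\<integral>\<^sup>+x. f x \<partial>M 0)" for n
  proof (induction n)
    case (Suc n)
    let ?E = "\<lambda>n. \<integral>\<^sup>+x. f x \<partial>M n" and ?P = "\<lambda>n. emeasure (M n) T"
    have "?E (Suc n) + ?P n = (\<integral>\<^sup>+x. (\<integral>\<^sup>+y. f y \<partial>K x) + indicator T x \<partial>M n)"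
      by (simp add: M_Suc nn_integral_add)
    also have "\<dots> \<le> ?E n"
      by (intro nn_integral_mono_AE) (simp add: AE_measure_pmf_iff drift)
    finally have one_step: "?E (Suc n) + ?P n \<le> ?E n" .
    have "?E (Suc n) + of_nat (Suc n) * ?P (Suc n) \<le> ?E (Suc n) + of_nat (Suc n) * ?P n"
      by (intro add_left_mono mult_left_mono tail_mono) simp
    also have "\<dots> = (?E (Suc n) + ?P n) + of_nat n * ?P n"
      by (simp add: distrib_right add_ac)
    also have "\<dots> \<le> ?E n + of_nat n * ?P n"
      using one_step by (rule add_right_mono)
    also have "\<dots> \<le> ?E 0"
      by (rule Suc.IH)
    finally show ?case .
  qed simp
  have "of_nat (Suc n) * emeasure (M n) T = emeasure (M n) T + of_nat n * emeasure (M n) T"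
    by (simp add: distrib_right)
  also have "\<dots> \<le> (\<integral>\<^sup>+x. f x \<partial>M n) + of_nat n * emeasure (M n) T"
    by (intro add_right_mono tail_le_potential)
  also have "\<dots> \<le> (\<integral>\<^sup>+x. f x \<partial>M 0)"
    by (rule accumulated)
  finally show ?thesis .
qed

lemma harm_pred_le_two_ln:
  assumes "n \<ge> 1"
  shows "harm (n - 1) \<le> 2 * ln (real n)"
proof -
  have "harm n - ln (real n) \<le> harm 1 - ln (real 1)"
    using assms by (rule euler_mascheroni_sequence_decreasing[rotated]) simp
  moreover have "harm n = harm (n - 1) + 1 / real n"
    using assms harm_Suc[of "n - 1"] by (simp add: divide_inverse)
  moreover have "ln (1 / real n) \<le> 1 / real n - 1"
    using assms by (intro ln_le_minus_one) simp
  ultimately show ?thesis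
    using assms by (simp add: harm_def ln_div)
qed

lemma DAff_inc:
  assumes "finite B" "g \<in> B" "g \<in> grid d"
  shows "g \<in> DAff d B"
proof -
  have "(\<Sum>a\<in>B. (if a = g then 1 else 0) * sigma a j) = sigma g j" for j
  proof -
    have "(\<Sum>a\<in>B. (if a = g then 1 else 0) * sigma a j) = (\<Sum>a\<in>B. if a = g then sigma g j else 0)"
      by (rule sum.cong) auto
    then show ?thesis using assms by simp
  qed
  moreover have "(\<Sum>a\<in>B. if a = g then 1 else 0 :: real) = 1"
    using assms by simp
  ultimately show ?thesis
    using assms(3) unfolding DAff_def by (intro CollectI conjI exI[of _ "\<lambda>a. if a = g then 1 else 0"]) simp_all
qed

lemma DAff_mono:
  assumes "finite B'" "B \<subseteq> B'"
  shows "DAff d B \<subseteq> DAff d B'"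
proof
  fix z assume "z \<in> DAff d B"
  then obtain \<alpha> where z: "z \<in> grid d" "(\<Sum>a\<in>B. \<alpha> a) = 1"
      "\<And>j. sigma z j = (\<Sum>a\<in>B. \<alpha> a * sigma a j)"
    unfolding DAff_def by blast
  define \<beta> where "\<beta> a = (if a \<in> B then \<alpha> a else 0)" for a
  have "(\<Sum>a\<in>B'. \<beta> a * h a) = (\<Sum>a\<in>B. \<alpha> a * h a)" for h :: "nat \<times> nat \<Rightarrow> real"
    by (rule sum.mono_neutral_cong_right) (use assms in \<open>auto simp: \<beta>_def\<close>)
  from this[of "\<lambda>_. 1"] this[of "\<lambda>a. sigma a _"] show "z \<in> DAff d B'"
    using z unfolding DAff_def by auto
qed

lemma DAff_rectangle_corner:
  assumes "(x0, y0) \<in> DAff d B" "(x, y0) \<in> DAff d B" "(x0, y) \<in> DAff d B"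
    and "(x, y) \<in> grid d"
  shows "(x, y) \<in> DAff d B"
proof -
  obtain \<alpha>1 where 1: "(\<Sum>a\<in>B. \<alpha>1 a) = 1" "\<And>j. sigma (x, y0) j = (\<Sum>a\<in>B. \<alpha>1 a * sigma a j)"
    using assms(2) unfolding DAff_def by blast
  obtain \<alpha>2 where 2: "(\<Sum>a\<in>B. \<alpha>2 a) = 1" "\<And>j. sigma (x0, y) j = (\<Sum>a\<in>B. \<alpha>2 a * sigma a j)"
    using assms(3) unfolding DAff_def by blast
  obtain \<alpha>0 where 0: "(\<Sum>a\<in>B. \<alpha>0 a) = 1" "\<And>j. sigma (x0, y0) j = (\<Sum>a\<in>B. \<alpha>0 a * sigma a j)"
    using assms(1) unfolding DAff_def by blast
  have corner: "sigma (x, y) j = sigma (x, y0) j + sigma (x0, y) j - sigma (x0, y0) j" for j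
    by (auto simp: sigma_def split: sum.split)
  define \<beta> where "\<beta> a = \<alpha>1 a + \<alpha>2 a - \<alpha>0 a" for a
  have "(\<Sum>a\<in>B. \<beta> a) = 1"
    using 0 1 2 by (simp add: \<beta>_def sum.distrib sum_subtractf)
  moreover have "sigma (x, y) j = (\<Sum>a\<in>B. \<beta> a * sigma a j)" for j
    unfolding corner 0 1 2 \<beta>_def by (simp add: algebra_simps sum.distrib sum_subtractf)
  ultimately show ?thesis
    using assms(4) unfolding DAff_def by blast
qed

lemma DAff_rectangle_insert_snd:
  assumes "A \<times> C \<subseteq> DAff d B" "g \<in> DAff d B" "fst g \<in> A" "C \<noteq> {}"
    and "A \<times> insert (snd g) C \<subseteq> grid d"
  shows "A \<times> insert (snd g) C \<subseteq> DAff d B"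
proof -
  obtain y0 where "y0 \<in> C" using assms(4) by blast
  have "(x, snd g) \<in> DAff d B" if "x \<in> A" for x
    using DAff_rectangle_corner[of "fst g" y0 d B x "snd g"] assms that \<open>y0 \<in> C\<close> by auto
  then show ?thesis using assms(1) by auto
qed

lemma DAff_rectangle_insert_fst:
  assumes "A \<times> C \<subseteq> DAff d B" "g \<in> DAff d B" "snd g \<in> C" "A \<noteq> {}"
    and "insert (fst g) A \<times> C \<subseteq> grid d"
  shows "insert (fst g) A \<times> C \<subseteq> DAff d B"
proof -
  obtain x0 where "x0 \<in> A" using assms(4) by blast
  have "(fst g, y) \<in> DAff d B" if "y \<in> C" for y
    using DAff_rectangle_corner[of x0 "snd g" d B "fst g" y] assms that \<open>x0 \<in> A\<close> by auto
  then show ?thesis using assms(1) by auto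
qed

lemma upd_rectangle_x:
  "C \<noteq> {} \<Longrightarrow> upd (A \<times> C, B, True) g =
     (if fst g \<in> A \<and> snd g \<notin> C then (A \<times> insert (snd g) C, insert g B, False)
      else (A \<times> C, B, True))"
  unfolding upd_def by (cases g) auto

lemma upd_rectangle_y:
  "A \<noteq> {} \<Longrightarrow> upd (A \<times> C, B, False) g =
     (if snd g \<in> C \<and> fst g \<notin> A then (insert (fst g) A \<times> C, insert g B, True)
      else (A \<times> C, B, False))"
  unfolding upd_def by (cases g) auto

fun proc_invariant :: "nat \<Rightarrow> state \<Rightarrow> bool" where
  "proc_invariant d (S, B, fl) \<longleftrightarrow> (\<exists>A C. S = A \<times> C \<and> A \<noteq> {} \<and> A \<subseteq> {1..d} \<and> C \<subseteq> {1..d}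
     \<and> card C = (if fl then card A else Suc (card A)) \<and> finite B \<and> S \<subseteq> DAff d B)"

lemma proc_invariantI:
  assumes "S = A \<times> C" "A \<noteq> {}" "A \<subseteq> {1..d}" "C \<subseteq> {1..d}"
    and "card C = (if fl then card A else Suc (card A))" "finite B" "S \<subseteq> DAff d B"
  shows "proc_invariant d (S, B, fl)"
  unfolding proc_invariant.simps using assms by blast

lemma proc_invariant_initial: "g \<in> grid d \<Longrightarrow> proc_invariant d ({g}, {g}, True)"
  using DAff_inc[of "{g}" g d]
  by (intro proc_invariantI[where A = "{fst g}" and C = "{snd g}"]) (auto simp: grid_def)

lemma proc_invariant_upd_x:
  assumes A: "A \<noteq> {}" "A \<subseteq> {1..d}" and C: "C \<subseteq> {1..d}" "card C = card A"
    and B: "finite B" "A \<times> C \<subseteq> DAff d B" and g: "g \<in> grid d"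
  shows "proc_invariant d (upd (A \<times> C, B, True) g)"
proof -
  have fin: "finite A" "finite C"
    using A C finite_subset by blast+
  then have "C \<noteq> {}"
    using A C by auto
  show ?thesis
  proof (cases "fst g \<in> A \<and> snd g \<notin> C")
    case True
    have upd_eq: "upd (A \<times> C, B, True) g = (A \<times> insert (snd g) C, insert g B, False)"
      using True \<open>C \<noteq> {}\<close> by (simp add: upd_rectangle_x)
    have "A \<times> insert (snd g) C \<subseteq> DAff d (insert g B)"
      using B DAff_mono[of "insert g B" B d] DAff_inc[of "insert g B" g d] A C g True \<open>C \<noteq> {}\<close>
      by (intro DAff_rectangle_insert_snd) (auto simp: grid_def)
    then show ?thesis
      unfolding upd_eq using A C B g True fin
      by (intro proc_invariantI[where A = A and C = "insert (snd g) C"]) (auto simp: grid_def)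
  next
    case False
    then have upd_eq: "upd (A \<times> C, B, True) g = (A \<times> C, B, True)"
      using \<open>C \<noteq> {}\<close> by (simp add: upd_rectangle_x)
    show ?thesis
      unfolding upd_eq using A C B by (intro proc_invariantI[where A = A and C = C]) simp_all
  qed
qed

lemma proc_invariant_upd_y:
  assumes A: "A \<noteq> {}" "A \<subseteq> {1..d}" and C: "C \<subseteq> {1..d}" "card C = Suc (card A)"
    and B: "finite B" "A \<times> C \<subseteq> DAff d B" and g: "g \<in> grid d"
  shows "proc_invariant d (upd (A \<times> C, B, False) g)"
proof -
  have fin: "finite A" "finite C"
    using A C finite_subset by blast+
  show ?thesis
  proof (cases "snd g \<in> C \<and> fst g \<notin> A")
    case True
    have upd_eq: "upd (A \<times> C, B, False) g = (insert (fst g) A \<times> C, insert g B, True)"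
      using True A by (simp add: upd_rectangle_y)
    have "insert (fst g) A \<times> C \<subseteq> DAff d (insert g B)"
      using B DAff_mono[of "insert g B" B d] DAff_inc[of "insert g B" g d] A C g True
      by (intro DAff_rectangle_insert_fst) (auto simp: grid_def)
    then show ?thesis
      unfolding upd_eq using A C B g True fin
      by (intro proc_invariantI[where A = "insert (fst g) A" and C = C]) (auto simp: grid_def)
  next
    case False
    then have upd_eq: "upd (A \<times> C, B, False) g = (A \<times> C, B, False)"
      using A by (simp add: upd_rectangle_y)
    show ?thesis
      unfolding upd_eq using A C B by (intro proc_invariantI[where A = A and C = C]) simp_all
  qed
qed

lemma upd_preserves_proc_invariant:
  assumes "proc_invariant d (S, B, fl)" "g \<in> grid d"
  shows "proc_invariant d (upd (S, B, fl) g)"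
proof -
  obtain A C where "S = A \<times> C" "A \<noteq> {}" "A \<subseteq> {1..d}" "C \<subseteq> {1..d}"
    "card C = (if fl then card A else Suc (card A))" "finite B" "A \<times> C \<subseteq> DAff d B"
    using assms(1) by auto
  then show ?thesis
    using assms(2) proc_invariant_upd_x[of A d C B g] proc_invariant_upd_y[of A d C B g]
    by (cases fl) simp_all
qed

(* remaining_x d k and remaining_y d k are the expected numbers of remaining iterations from a
  k x k resp. k x (k + 1) rectangle; wait_x d k and wait_y d k are the means of the geometric
  waiting times for the next successful sample. *)
definition wait_x :: "nat \<Rightarrow> nat \<Rightarrow> real" where
  "wait_x d k = real d ^ 2 / (real k * real (d - k))"

definition wait_y :: "nat \<Rightarrow> nat \<Rightarrow> real" where
  "wait_y d k = real d ^ 2 / (real (Suc k) * real (d - k))"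

definition remaining_x :: "nat \<Rightarrow> nat \<Rightarrow> real" where
  "remaining_x d k = (\<Sum>j\<in>{k..<d}. wait_x d j + wait_y d j)"

definition remaining_y :: "nat \<Rightarrow> nat \<Rightarrow> real" where
  "remaining_y d k = wait_y d k + remaining_x d (Suc k)"

fun potential :: "nat \<Rightarrow> state \<Rightarrow> real" where
  "potential d (S, B, fl) = (if fl then remaining_x d else remaining_y d) (card (fst ` S))"

lemma remaining_x_unfold: "k < d \<Longrightarrow> remaining_x d k = wait_x d k + remaining_y d k"
  unfolding remaining_x_def remaining_y_def by (simp add: sum.atLeast_Suc_lessThan)

lemma remaining_x_nonneg: "remaining_x d k \<ge> 0"
  unfolding remaining_x_def wait_x_def wait_y_def
  by (intro sum_nonneg add_nonneg_nonneg divide_nonneg_nonneg) auto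

lemma potential_nonneg: "potential d st \<ge> 0"
  using remaining_x_nonneg[of d]
  by (cases st) (auto simp: remaining_y_def wait_y_def intro!: add_nonneg_nonneg)

lemma card_grid: "card (grid d) = d * d"
  by (simp add: grid_def card_cartesian_product)

lemma potential_drift_x:
  assumes A: "A \<noteq> {}" "A \<subseteq> {1..d}" and C: "C \<subseteq> {1..d}" "card C = card A"
    and unfinished: "A \<times> C \<noteq> grid d"
  shows "(\<integral>g. potential d (upd (A \<times> C, B, True) g) \<partial>measure_pmf (pmf_of_set (grid d)))
      = potential d (A \<times> C, B, True) - 1"
proof -
  define k where "k = card A"
  have fin: "finite A" "finite C"
    using A C finite_subset by blast+
  then have "C \<noteq> {}" "k \<ge> 1"
    using A C by (auto simp: k_def Suc_le_eq card_gt_0_iff)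
  have "k \<le> d"
    using card_mono[OF _ A(2)] by (simp add: k_def)
  have "k \<noteq> d"
  proof
    assume "k = d"
    then have "A = {1..d}" "C = {1..d}"
      using A C by (simp_all add: k_def card_subset_eq)
    then show False
      using unfinished by (simp add: grid_def)
  qed
  then have "k < d"
    using \<open>k \<le> d\<close> by simp
  define H where "H = A \<times> ({1..d} - C)"
  have H: "H \<subseteq> grid d" "card H = k * (d - k)"
    using A C fin by (auto simp: H_def grid_def k_def card_cartesian_product card_Diff_subset)
  then have "H \<noteq> {}"
    using \<open>k \<ge> 1\<close> \<open>k < d\<close> by auto
  have wait: "wait_x d k = real (card (grid d)) / real (card H)"
    unfolding wait_x_def card_grid H(2) by (simp only: of_nat_mult power2_eq_square)
  have "potential d (upd (A \<times> C, B, True) g)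
      = (if g \<in> H then remaining_y d k else remaining_y d k + real (card (grid d)) / real (card H))"
    if "g \<in> grid d" for g
  proof -
    have "g \<in> H \<longleftrightarrow> fst g \<in> A \<and> snd g \<notin> C"
      using that by (auto simp: H_def grid_def)
    then show ?thesis
      using \<open>C \<noteq> {}\<close> remaining_x_unfold[OF \<open>k < d\<close>] wait by (simp add: upd_rectangle_x k_def)
  qed
  then have "(\<integral>g. potential d (upd (A \<times> C, B, True) g) \<partial>measure_pmf (pmf_of_set (grid d)))
      = remaining_y d k + real (card (grid d)) / real (card H) - 1"
    using H \<open>H \<noteq> {}\<close> by (intro integral_pmf_of_set_hit_or_wait) (auto simp: grid_def)
  then show ?thesis
    using \<open>C \<noteq> {}\<close> remaining_x_unfold[OF \<open>k < d\<close>] wait by (simp add: k_def)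
qed

lemma potential_drift_y:
  assumes A: "A \<noteq> {}" "A \<subseteq> {1..d}" and C: "C \<subseteq> {1..d}" "card C = Suc (card A)"
  shows "(\<integral>g. potential d (upd (A \<times> C, B, False) g) \<partial>measure_pmf (pmf_of_set (grid d)))
      = potential d (A \<times> C, B, False) - 1"
proof -
  define k where "k = card A"
  have fin: "finite A" "finite C"
    using A C finite_subset by blast+
  then have "C \<noteq> {}" "k < d"
    using A C card_mono[of "{1..d}" C] by (auto simp: k_def)
  define H where "H = ({1..d} - A) \<times> C"
  have H: "H \<subseteq> grid d" "card H = Suc k * (d - k)"
    using A C fin by (auto simp: H_def grid_def k_def card_cartesian_product card_Diff_subset)
  then have "H \<noteq> {}"
    using \<open>k < d\<close> by auto
  have wait: "wait_y d k = real (card (grid d)) / real (card H)"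
    unfolding wait_y_def card_grid H(2) by (simp only: of_nat_mult power2_eq_square)
  have "potential d (upd (A \<times> C, B, False) g)
      = (if g \<in> H then remaining_x d (Suc k) else remaining_x d (Suc k) + real (card (grid d)) / real (card H))"
    if "g \<in> grid d" for g
  proof -
    have "g \<in> H \<longleftrightarrow> snd g \<in> C \<and> fst g \<notin> A"
      using that by (auto simp: H_def grid_def)
    then show ?thesis
      using A fin \<open>C \<noteq> {}\<close> wait by (simp add: upd_rectangle_y k_def remaining_y_def)
  qed
  then have "(\<integral>g. potential d (upd (A \<times> C, B, False) g) \<partial>measure_pmf (pmf_of_set (grid d)))
      = remaining_x d (Suc k) + real (card (grid d)) / real (card H) - 1"
    using H \<open>H \<noteq> {}\<close> by (intro integral_pmf_of_set_hit_or_wait) (auto simp: grid_def)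
  then show ?thesis
    using \<open>C \<noteq> {}\<close> wait by (simp add: k_def remaining_y_def)
qed

lemma potential_drift:
  assumes "proc_invariant d st" "fst st \<noteq> grid d"
  shows "(\<integral>g. potential d (upd st g) \<partial>measure_pmf (pmf_of_set (grid d))) = potential d st - 1"
proof -
  obtain S B fl where st: "st = (S, B, fl)"
    by (cases st)
  then obtain A C where "S = A \<times> C" "A \<noteq> {}" "A \<subseteq> {1..d}" "C \<subseteq> {1..d}"
    "card C = (if fl then card A else Suc (card A))"
    using assms(1) by auto
  then show ?thesis
    using assms(2) st potential_drift_x potential_drift_y by (cases fl) auto
qed

lemma set_pmf_uniform_grid: "d \<ge> 1 \<Longrightarrow> set_pmf (pmf_of_set (grid d)) = grid d"
  by (auto simp: grid_def)

lemma step_potential_drift: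
  assumes "d \<ge> 1" "proc_invariant d st"
  shows "(\<integral>\<^sup>+st'. potential d st' \<partial>measure_pmf (step d st)) + indicator {st. fst st \<noteq> grid d} st
    \<le> ennreal (potential d st)"
proof (cases "fst st = grid d")
  case False
  have "(\<integral>\<^sup>+st'. potential d st' \<partial>measure_pmf (step d st))
      = (\<integral>\<^sup>+g. potential d (upd st g) \<partial>measure_pmf (pmf_of_set (grid d)))"
    using False by (simp add: step_def)
  also have "\<dots> = ennreal (\<integral>g. potential d (upd st g) \<partial>measure_pmf (pmf_of_set (grid d)))"
    using assms(1) by (intro nn_integral_eq_integral integrable_measure_pmf_finite)
      (auto simp: set_pmf_uniform_grid potential_nonneg grid_def)
  also have "\<dots> = ennreal (potential d st - 1)"
    using potential_drift[OF assms(2) False] by simp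
  moreover have "potential d st \<ge> 1"
    using potential_drift[OF assms(2) False] Bochner_Integration.integral_nonneg[of "measure_pmf (pmf_of_set (grid d))" "\<lambda>g. potential d (upd st g)"]
    by (simp add: potential_nonneg)
  then have "ennreal (potential d st - 1) + 1 = ennreal (potential d st)"
    using ennreal_plus[of "potential d st - 1" 1] by simp
  ultimately show ?thesis
    using False by simp
qed (simp add: step_def)

lemma step_preserves_proc_invariant:
  assumes "d \<ge> 1" "proc_invariant d st" "st' \<in> set_pmf (step d st)"
  shows "proc_invariant d st'"
  using assms upd_preserves_proc_invariant[of d "fst st" "fst (snd st)" "snd (snd st)"]
  by (auto simp: step_def set_pmf_uniform_grid split: if_splits)

lemma proc_invariant_set_pmf_proc:
  assumes "d \<ge> 1" "st \<in> set_pmf (proc d n)"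
  shows "proc_invariant d st"
  using assms(2)
proof (induction n arbitrary: st)
  case 0
  then show ?case
    using assms(1) by (auto simp: set_pmf_uniform_grid intro: proc_invariant_initial)
next
  case (Suc n)
  then obtain st0 where "st0 \<in> set_pmf (proc d n)" "st \<in> set_pmf (step d st0)"
    by auto
  then show ?case
    using Suc.IH step_preserves_proc_invariant[OF assms(1)] by blast
qed

lemma prob_DAff_grid_ge_finished:
  assumes "d \<ge> 1"
  shows "measure_pmf.prob (proc d n) {st. grid d \<subseteq> DAff d (fst (snd st))}
    \<ge> 1 - measure_pmf.prob (proc d n) {st. fst st \<noteq> grid d}"
proof -
  let ?M = "proc d n" and ?U = "{st. fst st \<noteq> grid d}"
  have "grid d \<subseteq> DAff d (fst (snd st))" if "st \<in> set_pmf ?M" "st \<notin> ?U" for st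
    using proc_invariant_set_pmf_proc[OF assms that(1)] that(2) by (cases st) auto
  then have "measure_pmf.prob ?M (- ?U) \<le> measure_pmf.prob ?M {st. grid d \<subseteq> DAff d (fst (snd st))}"
    by (intro measure_pmf.finite_measure_mono_AE) (auto simp: AE_measure_pmf_iff)
  moreover have "measure_pmf.prob ?M (- ?U) = 1 - measure_pmf.prob ?M ?U"
    using measure_pmf.prob_compl[of ?U ?M] by (simp add: Compl_eq_Diff_UNIV)
  ultimately show ?thesis
    by linarith
qed

lemma prob_unfinished_le_remaining:
  assumes "d \<ge> 1"
  shows "real (Suc n) * measure_pmf.prob (proc d n) {st. fst st \<noteq> grid d} \<le> remaining_x d 1"
proof -
  have "ennreal (real (Suc n) * measure_pmf.prob (proc d n) {st. fst st \<noteq> grid d})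
      = of_nat (Suc n) * emeasure (proc d n) {st. fst st \<noteq> grid d}"
    by (simp add: measure_pmf.emeasure_eq_measure ennreal_mult' ennreal_of_nat_eq_real_of_nat)
  also have "\<dots> \<le> (\<integral>\<^sup>+st. potential d st \<partial>proc d 0)"
    using step_potential_drift[OF assms] proc_invariant_set_pmf_proc[OF assms]
    by (intro drift_tail_bound) (auto simp: step_def)
  also have "\<dots> = remaining_x d 1"
    by simp
  finally show ?thesis
    using remaining_x_nonneg by simp
qed

lemma remaining_x_one_le:
  assumes "d \<ge> 1"
  shows "remaining_x d 1 \<le> 8 * real d * ln (real d)"
proof -
  let ?H = "\<Sum>j\<in>{1..<d}. 1 / real j"
  have "remaining_x d 1 \<le> (\<Sum>j\<in>{1..<d}. 2 * wait_x d j)"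
    unfolding remaining_x_def
  proof (rule sum_mono)
    fix j assume "j \<in> {1..<d}"
    then have "wait_y d j \<le> wait_x d j"
      unfolding wait_y_def wait_x_def by (intro divide_left_mono mult_right_mono) auto
    then show "wait_x d j + wait_y d j \<le> 2 * wait_x d j"
      by simp
  qed
  also have "\<dots> = (\<Sum>j\<in>{1..<d}. 2 * real d * (1 / real j + 1 / real (d - j)))"
    by (intro sum.cong) (auto simp: wait_x_def of_nat_diff field_simps power2_eq_square)
  also have "\<dots> = 2 * real d * (?H + (\<Sum>j\<in>{1..<d}. 1 / real (d - j)))"
    unfolding sum.distrib[symmetric] sum_distrib_left ..
  also have "(\<Sum>j\<in>{1..<d}. 1 / real (d - j)) = ?H"
    by (rule sum.reindex_bij_witness[of _ "\<lambda>j. d - j" "\<lambda>j. d - j"]) auto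
  also have "?H = harm (d - 1)"
  proof -
    have "{1..<d} = {1..d - 1}"
      using assms by auto
    then show ?thesis
      by (simp add: harm_def divide_inverse)
  qed
  finally have "remaining_x d 1 \<le> 4 * real d * harm (d - 1)"
    by simp
  also have "\<dots> \<le> 4 * real d * (2 * ln (real d))"
    using harm_pred_le_two_ln[OF assms] by (intro mult_left_mono) auto
  finally show ?thesis
    by simp
qed

theorem theorem5:
  fixes d N :: nat and c :: real
  assumes "d \<ge> 1" and "c > 0"
    and "real N > 8 * c * real d * ln (real d)"
  shows "measure_pmf.prob (proc d (N - 1)) {st. grid d \<subseteq> DAff d (fst (snd st))} \<ge> 1 - 1 / c"
proof -
  let ?M = "proc d (N - 1)" and ?U = "{st. fst st \<noteq> grid d}"
  have "0 \<le> 8 * c * real d * ln (real d)"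
    using assms(1,2) by simp
  then have "N \<ge> 1"
    using assms(3) by linarith
  then have "real N * measure_pmf.prob ?M ?U \<le> 8 * real d * ln (real d)"
    using prob_unfinished_le_remaining[OF assms(1), of "N - 1"] remaining_x_one_le[OF assms(1)]
    by simp
  then have "c * (real N * measure_pmf.prob ?M ?U) \<le> c * (8 * real d * ln (real d))"
    using assms(2) by (intro mult_left_mono) simp_all
  also have "\<dots> < real N"
    using assms(3) by (simp add: mult_ac)
  finally have "c * measure_pmf.prob ?M ?U < 1"
    using \<open>N \<ge> 1\<close> by (simp add: mult.left_commute[of c])
  then have "measure_pmf.prob ?M ?U \<le> 1 / c"
    using assms(2) by (simp add: field_simps)
  then show ?thesis
    using prob_DAff_grid_ge_finished[OF assms(1), of "N - 1"] by linarith
qed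

end
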